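(* Let $\alpha=0.8$, let $x\sim\mathcal N(0,1)$ and let $b\in\{0,1\}$ be independent of $x$ with $\mathbb P(b=1)=\alpha$. For $w>0$ let $\tau_w>0$ be the unique number with $\mathbb P(|b-xw|<\tau_w)=1-\alpha$, let $A_w=\{|b-xw|<\tau_w\}$, and define the population TORRENT update $$F(w)=\frac{\mathbb E[b\,x\,\mathbb I(A_w)]}{\mathbb E[x^2\,\mathbb I(A_w)]}.$$ Then there exists $w>1/2$ with $F(w)=w$; i.e., TORRENT in the infinite-sample limit, for the model $y=xw^*+b$ with $w^*=0$, has a fixed point at distance greater than $1/2$ from $w^*$.
   Context: TORRENT is the alternating procedure that, given the current $w$, keeps the $(1-\alpha)$ fraction of points with the smallest absolute residuals $|y_i-x_iw|$ and refits least squares on them; $F$ is its $n\to\infty$ limit for one-dimensional data $y_i=x_iw^*+b_i$ with $w^*=0$, $x_i$ i.i.d. $\mathcal N(0,1)$ and an $\alpha$ fraction of $b_i$ equal to $1$ (the rest $0$), independent of the $x_i$. $\mathbb I$ is the indicator. *)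

theory Defs
  imports "HOL-Probability.Probability"
begin

definition torrent_alpha :: real where
  "torrent_alpha = 0.8"

text \<open>Joint law of (x, b), with b encoded as a boolean (True means b = 1).\<close>
definition torrent_M :: "(real \<times> bool) measure" where
  "torrent_M = density lborel std_normal_density \<Otimes>\<^sub>M measure_pmf (bernoulli_pmf torrent_alpha)"

definition bval :: "bool \<Rightarrow> real" where
  "bval c = (if c then 1 else 0)"

definition torrent_event :: "real \<Rightarrow> real \<Rightarrow> (real \<times> bool) set" where
  "torrent_event w \<tau> = {p \<in> space torrent_M. \<bar>bval (snd p) - fst p * w\<bar> < \<tau>}"

definition torrent_tau :: "real \<Rightarrow> real" where
  "torrent_tau w = (THE \<tau>. \<tau> > 0 \<and> measure torrent_M (torrent_event w \<tau>) = 1 - torrent_alpha)"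

definition torrent_A :: "real \<Rightarrow> (real \<times> bool) set" where
  "torrent_A w = torrent_event w (torrent_tau w)"

definition torrent_F :: "real \<Rightarrow> real" where
  "torrent_F w =
     (\<integral>p. bval (snd p) * fst p * indicator (torrent_A w) p \<partial>torrent_M) /
     (\<integral>p. (fst p)\<^sup>2 * indicator (torrent_A w) p \<partial>torrent_M)"

end

theory Submission
  imports Defs
begin

text \<open>Conditioning on \<open>b\<close>, the probability of \<open>|b - x w| < \<tau>\<close> and both expectations in
  \<open>F(w)\<close> become integrals of \<open>exp (-x\<^sup>2/2)\<close> and \<open>x\<^sup>2 exp (-x\<^sup>2/2)\<close> over the intervals
  \<open>((1-\<tau>)/w, (1+\<tau>)/w)\<close> and \<open>(-\<tau>/w, \<tau>/w)\<close>. The probability is strictly increasing in \<open>\<tau>\<close>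
  and continuous in \<open>w\<close>, so \<open>\<tau>\<^sub>w\<close>, and with it \<open>F\<close>, is continuous on \<open>[11/20, 2]\<close>.
  The Taylor polynomials of \<open>exp (-x\<^sup>2/2)\<close> alternately lie below and above it, so integrating
  them gives two-sided bounds for these integrals; evaluated in integer fixed-point arithmetic
  they show \<open>F(11/20) > 11/20\<close> and \<open>F(2) < 2\<close>, and the intermediate value theorem yields
  the fixed point.\<close>

section \<open>Alternating series in fixed-point arithmetic\<close>

definition ratio_prod :: "(nat \<Rightarrow> nat) \<Rightarrow> (nat \<Rightarrow> nat) \<Rightarrow> nat \<Rightarrow> real" where
  "ratio_prod rn rd k = (\<Prod>j<k. real (rn j) / real (rd j))"

lemma ratio_prod_0 [simp]: "ratio_prod rn rd 0 = 1"
  by (simp add: ratio_prod_def)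

lemma ratio_prod_Suc: "ratio_prod rn rd (Suc k) = ratio_prod rn rd k * (real (rn k) / real (rd k))"
  by (simp add: ratio_prod_def)

text \<open>Integer fixed-point enclosure of
  \<open>D * (\<Sum>j\<in>{k..<k+n}. (-1)^j * (P/Q)^j * ratio_prod rn rd j)\<close>: the pair \<open>ml \<le> mh\<close>
  encloses the current term and is rounded outwards each time it is multiplied by the
  next ratio \<open>P * rn k / (Q * rd k)\<close>.\<close>
fun alt_sum_lower :: "nat \<Rightarrow> nat \<Rightarrow> (nat \<Rightarrow> nat) \<Rightarrow> (nat \<Rightarrow> nat) \<Rightarrow> nat \<Rightarrow> nat \<Rightarrow> nat \<Rightarrow> nat \<Rightarrow> int" where
  "alt_sum_lower P Q rn rd ml mh k 0 = 0"
| "alt_sum_lower P Q rn rd ml mh k (Suc n) =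
     (if even k then int ml else - int mh) +
     alt_sum_lower P Q rn rd (ml * P * rn k div (Q * rd k))
       ((mh * P * rn k + (Q * rd k - 1)) div (Q * rd k)) (Suc k) n"

fun alt_sum_upper :: "nat \<Rightarrow> nat \<Rightarrow> (nat \<Rightarrow> nat) \<Rightarrow> (nat \<Rightarrow> nat) \<Rightarrow> nat \<Rightarrow> nat \<Rightarrow> nat \<Rightarrow> nat \<Rightarrow> int" where
  "alt_sum_upper P Q rn rd ml mh k 0 = 0"
| "alt_sum_upper P Q rn rd ml mh k (Suc n) =
     (if even k then int mh else - int ml) +
     alt_sum_upper P Q rn rd (ml * P * rn k div (Q * rd k))
       ((mh * P * rn k + (Q * rd k - 1)) div (Q * rd k)) (Suc k) n"

lemma alt_sum_lower_numeral [simp]: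
  "alt_sum_lower P Q rn rd ml mh k (numeral n) =
     (if even k then int ml else - int mh) +
     alt_sum_lower P Q rn rd (ml * P * rn k div (Q * rd k))
       ((mh * P * rn k + (Q * rd k - 1)) div (Q * rd k)) (Suc k) (pred_numeral n)"
  by (simp add: numeral_eq_Suc)

lemma alt_sum_upper_numeral [simp]:
  "alt_sum_upper P Q rn rd ml mh k (numeral n) =
     (if even k then int mh else - int ml) +
     alt_sum_upper P Q rn rd (ml * P * rn k div (Q * rd k))
       ((mh * P * rn k + (Q * rd k - 1)) div (Q * rd k)) (Suc k) (pred_numeral n)"
  by (simp add: numeral_eq_Suc)

lemma of_nat_le_div_round_up:
  assumes "(b::nat) > 0"
  shows "real a / real b \<le> real ((a + (b - 1)) div b)"
proof -
  define q where "q = (a + (b - 1)) div b"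
  have "q * b + (a + (b - 1)) mod b = a + (b - 1)"
    unfolding q_def by simp
  moreover have "(a + (b - 1)) mod b < b"
    using assms by simp
  ultimately have "a \<le> q * b"
    by linarith
  then have "real a \<le> real q * real b"
    by (metis of_nat_le_iff of_nat_mult)
  then show ?thesis
    using assms by (simp add: divide_le_eq q_def)
qed

lemma alt_sum_term_enclosure:
  assumes "rd k > 0" "Q > 0"
    and "real ml \<le> D * (real P / real Q)^k * ratio_prod rn rd k"
    and "D * (real P / real Q)^k * ratio_prod rn rd k \<le> real mh"
  shows "real (ml * P * rn k div (Q * rd k)) \<le> D * (real P / real Q)^Suc k * ratio_prod rn rd (Suc k)"
    and "D * (real P / real Q)^Suc k * ratio_prod rn rd (Suc k)
      \<le> real ((mh * P * rn k + (Q * rd k - 1)) div (Q * rd k))"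
proof -
  define r where "r = real P * real (rn k) / (real Q * real (rd k))"
  have r: "0 \<le> r"
    unfolding r_def by simp
  have next_term: "D * (real P / real Q)^Suc k * ratio_prod rn rd (Suc k)
      = D * (real P / real Q)^k * ratio_prod rn rd k * r"
    unfolding r_def ratio_prod_Suc using assms(1,2) by (simp add: field_simps)
  have "real (ml * P * rn k div (Q * rd k)) \<le> real (ml * P * rn k) / real (Q * rd k)"
    by (rule of_nat_div_le_of_nat)
  also have "\<dots> = real ml * r"
    unfolding r_def by simp
  also have "\<dots> \<le> D * (real P / real Q)^Suc k * ratio_prod rn rd (Suc k)"
    unfolding next_term using assms(3) r by (rule mult_right_mono)
  finally show "real (ml * P * rn k div (Q * rd k)) \<le> D * (real P / real Q)^Suc k * ratio_prod rn rd (Suc k)" .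
  have "D * (real P / real Q)^Suc k * ratio_prod rn rd (Suc k) \<le> real mh * r"
    unfolding next_term using assms(4) r by (rule mult_right_mono)
  also have "\<dots> = real (mh * P * rn k) / real (Q * rd k)"
    unfolding r_def by simp
  also have "\<dots> \<le> real ((mh * P * rn k + (Q * rd k - 1)) div (Q * rd k))"
    using assms(1,2) by (intro of_nat_le_div_round_up) simp
  finally show "D * (real P / real Q)^Suc k * ratio_prod rn rd (Suc k)
      \<le> real ((mh * P * rn k + (Q * rd k - 1)) div (Q * rd k))" .
qed

lemma alt_sum_enclosure:
  fixes n :: nat
  assumes "\<And>j. rd j > 0" "Q > 0"
    and "real ml \<le> D * (real P / real Q)^k * ratio_prod rn rd k"
    and "D * (real P / real Q)^k * ratio_prod rn rd k \<le> real mh"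
  defines "S \<equiv> D * (\<Sum>j\<in>{k..<k+n}. (-1)^j * (real P / real Q)^j * ratio_prod rn rd j)"
  shows "real_of_int (alt_sum_lower P Q rn rd ml mh k n) \<le> S
    \<and> S \<le> real_of_int (alt_sum_upper P Q rn rd ml mh k n)"
  using assms(3,4) unfolding S_def
proof (induction n arbitrary: ml mh k)
  case 0
  then show ?case by simp
next
  case (Suc n)
  have "{k..<k + Suc n} = insert k {Suc k..<Suc k + n}"
    by auto
  then have split: "(\<Sum>j\<in>{k..<k+Suc n}. (-1)^j * (real P / real Q)^j * ratio_prod rn rd j)
      = (-1)^k * (real P / real Q)^k * ratio_prod rn rd k
        + (\<Sum>j\<in>{Suc k..<Suc k+n}. (-1)^j * (real P / real Q)^j * ratio_prod rn rd j)"
    by simp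
  show ?case
    using Suc.IH[OF alt_sum_term_enclosure[OF assms(1,2) Suc.prems]] Suc.prems
    unfolding split alt_sum_lower.simps alt_sum_upper.simps
    by (cases "even k") (auto simp: algebra_simps)
qed

lemma alt_sum_bounds:
  fixes P n :: nat and rn :: "nat \<Rightarrow> nat"
  assumes "\<And>j. rd j > 0" "Q > 0" "D > 0"
  defines "s \<equiv> \<Sum>j<n. (-1)^j * (real P / real Q)^j * ratio_prod rn rd j"
  shows "real_of_int (alt_sum_lower P Q rn rd D D 0 n) / real D \<le> s"
    and "s \<le> real_of_int (alt_sum_upper P Q rn rd D D 0 n) / real D"
proof -
  have "{0..<0+n} = {..<n}"
    by auto
  then have "real_of_int (alt_sum_lower P Q rn rd D D 0 n) \<le> real D * s
      \<and> real D * s \<le> real_of_int (alt_sum_upper P Q rn rd D D 0 n)"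
    using alt_sum_enclosure[of rd Q D "real D" P 0 rn D n] assms(1,2) unfolding s_def by simp
  then show "real_of_int (alt_sum_lower P Q rn rd D D 0 n) / real D \<le> s"
    and "s \<le> real_of_int (alt_sum_upper P Q rn rd D D 0 n) / real D"
    using assms(3) by (simp_all add: divide_le_eq le_divide_eq mult.commute)
qed

section \<open>Taylor polynomials of the Gaussian kernel\<close>

definition gauss :: "real \<Rightarrow> real" where
  "gauss x = exp (-(x^2)/2)"

definition gauss_taylor :: "nat \<Rightarrow> real \<Rightarrow> real" where
  "gauss_taylor n x = (\<Sum>k<n. (-1)^k * (x^2)^k / (2^k * fact k))"

definition gauss_taylor_prim :: "nat \<Rightarrow> real \<Rightarrow> real" where
  "gauss_taylor_prim n x = (\<Sum>k<n. (-1)^k * x^(2*k+1) / (2^k * (2*real k+1) * fact k))"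

definition sq_gauss_taylor_prim :: "nat \<Rightarrow> real \<Rightarrow> real" where
  "sq_gauss_taylor_prim n x = (\<Sum>k<n. (-1)^k * x^(2*k+3) / (2^k * (2*real k+3) * fact k))"

lemma ratio_prod_gauss_taylor:
  "ratio_prod (\<lambda>_. 1) (\<lambda>k. 2*(k+1)) k = 1 / (2^k * fact k)"
  by (induction k) (simp_all only: ratio_prod_Suc ratio_prod_0, simp_all add: field_simps)

lemma ratio_prod_gauss_taylor_prim:
  "ratio_prod (\<lambda>k. 2*k+1) (\<lambda>k. 2*(2*k+3)*(k+1)) k = 1 / (2^k * (2*real k+1) * fact k)"
proof (induction k)
  case (Suc k)
  have "2*real k+1 > 0" "2*(2*real k+3)*(real k+1) > 0"
    by (simp_all add: zero_less_mult_iff)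
  then show ?case
    unfolding ratio_prod_Suc Suc.IH by (simp add: divide_simps; simp add: algebra_simps)
qed simp

lemma ratio_prod_sq_gauss_taylor_prim:
  "ratio_prod (\<lambda>k. 2*k+3) (\<lambda>k. 2*(2*k+5)*(k+1)) k = 3 / (2^k * (2*real k+3) * fact k)"
proof (induction k)
  case (Suc k)
  have "2*real k+3 > 0" "2*(2*real k+5)*(real k+1) > 0"
    by (simp_all add: zero_less_mult_iff)
  then show ?case
    unfolding ratio_prod_Suc Suc.IH by (simp add: divide_simps; simp add: algebra_simps)
qed simp

lemma gauss_taylor_eq_alt_sum:
  "gauss_taylor n x = (\<Sum>k<n. (-1)^k * (x^2)^k * ratio_prod (\<lambda>_. 1) (\<lambda>k. 2*(k+1)) k)"
  unfolding gauss_taylor_def ratio_prod_gauss_taylor by simp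

lemma gauss_taylor_prim_eq_alt_sum:
  "gauss_taylor_prim n x
     = x * (\<Sum>k<n. (-1)^k * (x^2)^k * ratio_prod (\<lambda>k. 2*k+1) (\<lambda>k. 2*(2*k+3)*(k+1)) k)"
  unfolding gauss_taylor_prim_def ratio_prod_gauss_taylor_prim sum_distrib_left
  by (rule sum.cong) (auto simp: power_mult[symmetric] power_add field_simps)

lemma sq_gauss_taylor_prim_eq_alt_sum:
  "sq_gauss_taylor_prim n x
     = x^3 / 3 * (\<Sum>k<n. (-1)^k * (x^2)^k * ratio_prod (\<lambda>k. 2*k+3) (\<lambda>k. 2*(2*k+5)*(k+1)) k)"
  unfolding sq_gauss_taylor_prim_def ratio_prod_sq_gauss_taylor_prim sum_distrib_left
  by (rule sum.cong) (auto simp: power_mult[symmetric] power_add field_simps)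

lemma of_nat_power2_divide: "real (p^2) / real (q^2) = (real p / real q)^2"
  by (simp add: power_divide)

lemma gauss_taylor_ge_certified:
  assumes "x = real p / real q" "q > 0" "D > 0"
    and "B \<le> real_of_int (alt_sum_lower (p^2) (q^2) (\<lambda>_. 1) (\<lambda>k. 2*(k+1)) D D 0 n) / real D"
  shows "B \<le> gauss_taylor n x"
  using alt_sum_bounds(1)[where P="p^2" and Q="q^2" and rn="\<lambda>_. 1" and rd="\<lambda>k. 2*(k+1)" and D=D and n=n] assms
  unfolding gauss_taylor_eq_alt_sum of_nat_power2_divide by simp

lemma gauss_taylor_le_certified:
  assumes "x = real p / real q" "q > 0" "D > 0"
    and "real_of_int (alt_sum_upper (p^2) (q^2) (\<lambda>_. 1) (\<lambda>k. 2*(k+1)) D D 0 n) / real D \<le> B"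
  shows "gauss_taylor n x \<le> B"
  using alt_sum_bounds(2)[where P="p^2" and Q="q^2" and rn="\<lambda>_. 1" and rd="\<lambda>k. 2*(k+1)" and D=D and n=n] assms
  unfolding gauss_taylor_eq_alt_sum of_nat_power2_divide by simp

lemma gauss_taylor_prim_ge_certified:
  assumes "x = real p / real q" "q > 0" "D > 0"
    and "B \<le> x * (real_of_int (alt_sum_lower (p^2) (q^2) (\<lambda>k. 2*k+1) (\<lambda>k. 2*(2*k+3)*(k+1)) D D 0 n) / real D)"
  shows "B \<le> gauss_taylor_prim n x"
proof -
  have "x * (real_of_int (alt_sum_lower (p^2) (q^2) (\<lambda>k. 2*k+1) (\<lambda>k. 2*(2*k+3)*(k+1)) D D 0 n) / real D)
      \<le> gauss_taylor_prim n x"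
    using alt_sum_bounds(1)[where P="p^2" and Q="q^2" and rn="\<lambda>k. 2*k+1" and rd="\<lambda>k. 2*(2*k+3)*(k+1)" and D=D and n=n] assms(1-3)
    unfolding gauss_taylor_prim_eq_alt_sum of_nat_power2_divide by (intro mult_left_mono) simp_all
  with assms(4) show ?thesis by linarith
qed

lemma gauss_taylor_prim_le_certified:
  assumes "x = real p / real q" "q > 0" "D > 0"
    and "x * (real_of_int (alt_sum_upper (p^2) (q^2) (\<lambda>k. 2*k+1) (\<lambda>k. 2*(2*k+3)*(k+1)) D D 0 n) / real D) \<le> B"
  shows "gauss_taylor_prim n x \<le> B"
proof -
  have "gauss_taylor_prim n x
      \<le> x * (real_of_int (alt_sum_upper (p^2) (q^2) (\<lambda>k. 2*k+1) (\<lambda>k. 2*(2*k+3)*(k+1)) D D 0 n) / real D)"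
    using alt_sum_bounds(2)[where P="p^2" and Q="q^2" and rn="\<lambda>k. 2*k+1" and rd="\<lambda>k. 2*(2*k+3)*(k+1)" and D=D and n=n] assms(1-3)
    unfolding gauss_taylor_prim_eq_alt_sum of_nat_power2_divide by (intro mult_left_mono) simp_all
  with assms(4) show ?thesis by linarith
qed

lemma sq_gauss_taylor_prim_ge_certified:
  assumes "x = real p / real q" "q > 0" "D > 0"
    and "B \<le> x^3 / 3 * (real_of_int (alt_sum_lower (p^2) (q^2) (\<lambda>k. 2*k+3) (\<lambda>k. 2*(2*k+5)*(k+1)) D D 0 n) / real D)"
  shows "B \<le> sq_gauss_taylor_prim n x"
proof -
  have "x^3 / 3 * (real_of_int (alt_sum_lower (p^2) (q^2) (\<lambda>k. 2*k+3) (\<lambda>k. 2*(2*k+5)*(k+1)) D D 0 n) / real D)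
      \<le> sq_gauss_taylor_prim n x"
    using alt_sum_bounds(1)[where P="p^2" and Q="q^2" and rn="\<lambda>k. 2*k+3" and rd="\<lambda>k. 2*(2*k+5)*(k+1)" and D=D and n=n] assms(1-3)
    unfolding sq_gauss_taylor_prim_eq_alt_sum of_nat_power2_divide by (intro mult_left_mono) simp_all
  with assms(4) show ?thesis by linarith
qed

lemma sq_gauss_taylor_prim_le_certified:
  assumes "x = real p / real q" "q > 0" "D > 0"
    and "x^3 / 3 * (real_of_int (alt_sum_upper (p^2) (q^2) (\<lambda>k. 2*k+3) (\<lambda>k. 2*(2*k+5)*(k+1)) D D 0 n) / real D) \<le> B"
  shows "sq_gauss_taylor_prim n x \<le> B"
proof -
  have "sq_gauss_taylor_prim n x
      \<le> x^3 / 3 * (real_of_int (alt_sum_upper (p^2) (q^2) (\<lambda>k. 2*k+3) (\<lambda>k. 2*(2*k+5)*(k+1)) D D 0 n) / real D)"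
    using alt_sum_bounds(2)[where P="p^2" and Q="q^2" and rn="\<lambda>k. 2*k+3" and rd="\<lambda>k. 2*(2*k+5)*(k+1)" and D=D and n=n] assms(1-3)
    unfolding sq_gauss_taylor_prim_eq_alt_sum of_nat_power2_divide by (intro mult_left_mono) simp_all
  with assms(4) show ?thesis by linarith
qed

lemma gauss_taylor_eq_exp_taylor: "gauss_taylor n x = (\<Sum>k<n. (-(x^2)/2)^k / fact k)"
  unfolding gauss_taylor_def by (rule sum.cong) (auto simp: power_divide power_minus')

lemma gauss_taylor_le_gauss:
  assumes "even n"
  shows "gauss_taylor n x \<le> gauss x"
proof -
  obtain t where t: "exp (-(x^2)/2) = (\<Sum>k<n. (-(x^2)/2)^k / fact k) + exp t / fact n * (-(x^2)/2)^n"
    using Maclaurin_exp_le[of "-(x^2)/2" n] by auto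
  have "0 \<le> exp t / fact n * (-(x^2)/2)^n"
    using assms by (simp add: zero_le_even_power)
  then show ?thesis
    unfolding gauss_def gauss_taylor_eq_exp_taylor t by simp
qed

lemma gauss_le_gauss_taylor:
  assumes "odd n"
  shows "gauss x \<le> gauss_taylor n x"
proof -
  obtain t where t: "exp (-(x^2)/2) = (\<Sum>k<n. (-(x^2)/2)^k / fact k) + exp t / fact n * (-(x^2)/2)^n"
    using Maclaurin_exp_le[of "-(x^2)/2" n] by auto
  have "exp t / fact n * (-(x^2)/2)^n \<le> 0"
    using assms by (simp add: power_minus_odd)
  then show ?thesis
    unfolding gauss_def gauss_taylor_eq_exp_taylor t by simp
qed

lemma mult_divide_cancel_middle: "(m::real) \<noteq> 0 \<Longrightarrow> c * (m * y) / (a * m * f) = c * y / (a * f)"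
  by (simp add: divide_simps)

lemma has_real_derivative_gauss_taylor_prim:
  "(gauss_taylor_prim n has_real_derivative gauss_taylor n x) (at x within S)"
  unfolding gauss_taylor_prim_def gauss_taylor_def
proof (rule DERIV_sum)
  fix k
  have "((\<lambda>x. (-1)^k * x^(2*k+1) / (2^k * (2*real k+1) * fact k)) has_real_derivative
      (-1)^k * (real (2*k+1) * x^(2*k+1 - Suc 0)) / (2^k * (2*real k+1) * fact k)) (at x within S)"
    by (intro DERIV_cdivide DERIV_cmult DERIV_pow)
  moreover have "real (2*k+1) = 2*real k+1" "x^(2*k+1 - Suc 0) = (x^2)^k"
    by (simp_all add: power_mult)
  moreover have "(-1)^k * ((2*real k+1) * (x^2)^k) / (2^k * (2*real k+1) * fact k)
      = (-1)^k * (x^2)^k / (2^k * fact k)"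
    by (rule mult_divide_cancel_middle) linarith
  ultimately show "((\<lambda>x. (-1)^k * x^(2*k+1) / (2^k * (2*real k+1) * fact k)) has_real_derivative
      (-1)^k * (x^2)^k / (2^k * fact k)) (at x within S)"
    by (simp only:)
qed

lemma has_real_derivative_sq_gauss_taylor_prim:
  "(sq_gauss_taylor_prim n has_real_derivative x^2 * gauss_taylor n x) (at x within S)"
  unfolding sq_gauss_taylor_prim_def gauss_taylor_def sum_distrib_left
proof (rule DERIV_sum)
  fix k
  have "((\<lambda>x. (-1)^k * x^(2*k+3) / (2^k * (2*real k+3) * fact k)) has_real_derivative
      (-1)^k * (real (2*k+3) * x^(2*k+3 - Suc 0)) / (2^k * (2*real k+3) * fact k)) (at x within S)"
    by (intro DERIV_cdivide DERIV_cmult DERIV_pow)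
  moreover have "real (2*k+3) = 2*real k+3" "x^(2*k+3 - Suc 0) = x^2 * (x^2)^k"
    by (simp_all add: power_mult[symmetric] power_add[symmetric])
  moreover have "(-1)^k * ((2*real k+3) * (x^2 * (x^2)^k)) / (2^k * (2*real k+3) * fact k)
      = x^2 * ((-1)^k * (x^2)^k / (2^k * fact k))"
    by (subst mult_divide_cancel_middle) (linarith, simp)
  ultimately show "((\<lambda>x. (-1)^k * x^(2*k+3) / (2^k * (2*real k+3) * fact k)) has_real_derivative
      x^2 * ((-1)^k * (x^2)^k / (2^k * fact k))) (at x within S)"
    by (simp only:)
qed

lemma gauss_taylor_prim_minus: "gauss_taylor_prim n (-x) = - gauss_taylor_prim n x"
  unfolding gauss_taylor_prim_def by (simp add: sum_negf[symmetric] power_minus_odd)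

lemma sq_gauss_taylor_prim_minus: "sq_gauss_taylor_prim n (-x) = - sq_gauss_taylor_prim n x"
  unfolding sq_gauss_taylor_prim_def by (simp add: sum_negf[symmetric] power_minus_odd)

section \<open>Integrals of the Gaussian kernel over intervals\<close>

definition gauss_int :: "real \<Rightarrow> real \<Rightarrow> real" where
  "gauss_int l u = integral {l..u} gauss"

definition sq_gauss_int :: "real \<Rightarrow> real \<Rightarrow> real" where
  "sq_gauss_int l u = integral {l..u} (\<lambda>x. x^2 * gauss x)"

lemma gauss_pos: "gauss x > 0"
  unfolding gauss_def by simp

lemma gauss_antimono: "0 \<le> x \<Longrightarrow> x \<le> y \<Longrightarrow> gauss y \<le> gauss x"
  unfolding gauss_def by (simp add: power_mono)

lemma continuous_on_gauss: "continuous_on S gauss"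
  unfolding gauss_def by (intro continuous_intros) auto

lemma gauss_integrable: "gauss integrable_on {l..u}"
  by (intro integrable_continuous_interval continuous_on_gauss)

lemma sq_gauss_integrable: "(\<lambda>x. x^2 * gauss x) integrable_on {l..u}"
  by (intro integrable_continuous_interval continuous_intros continuous_on_gauss)

lemma gauss_int_bounds:
  assumes "l \<le> u"
  shows "even n \<Longrightarrow> gauss_taylor_prim n u - gauss_taylor_prim n l \<le> gauss_int l u"
    and "odd n \<Longrightarrow> gauss_int l u \<le> gauss_taylor_prim n u - gauss_taylor_prim n l"
proof -
  have taylor: "(gauss_taylor n has_integral (gauss_taylor_prim n u - gauss_taylor_prim n l)) {l..u}"
    using assms by (intro fundamental_theorem_of_calculus)
      (auto simp: has_real_derivative_iff_has_vector_derivative[symmetric]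
        has_real_derivative_gauss_taylor_prim)
  have "(gauss has_integral gauss_int l u) {l..u}"
    unfolding gauss_int_def using gauss_integrable by (rule integrable_integral)
  with taylor show "even n \<Longrightarrow> gauss_taylor_prim n u - gauss_taylor_prim n l \<le> gauss_int l u"
    and "odd n \<Longrightarrow> gauss_int l u \<le> gauss_taylor_prim n u - gauss_taylor_prim n l"
    by (auto intro: has_integral_le gauss_taylor_le_gauss gauss_le_gauss_taylor)
qed

lemma sq_gauss_int_bounds:
  assumes "l \<le> u"
  shows "even n \<Longrightarrow> sq_gauss_taylor_prim n u - sq_gauss_taylor_prim n l \<le> sq_gauss_int l u"
    and "odd n \<Longrightarrow> sq_gauss_int l u \<le> sq_gauss_taylor_prim n u - sq_gauss_taylor_prim n l"
proof -
  have taylor: "((\<lambda>x. x^2 * gauss_taylor n x) has_integral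
      (sq_gauss_taylor_prim n u - sq_gauss_taylor_prim n l)) {l..u}"
    using assms by (intro fundamental_theorem_of_calculus)
      (auto simp: has_real_derivative_iff_has_vector_derivative[symmetric]
        has_real_derivative_sq_gauss_taylor_prim)
  have "((\<lambda>x. x^2 * gauss x) has_integral sq_gauss_int l u) {l..u}"
    unfolding sq_gauss_int_def using sq_gauss_integrable by (rule integrable_integral)
  note int = this
  show "sq_gauss_taylor_prim n u - sq_gauss_taylor_prim n l \<le> sq_gauss_int l u" if "even n"
    by (rule has_integral_le[OF taylor int]) (simp add: mult_left_mono gauss_taylor_le_gauss that)
  show "sq_gauss_int l u \<le> sq_gauss_taylor_prim n u - sq_gauss_taylor_prim n l" if "odd n"
    by (rule has_integral_le[OF int taylor]) (simp add: mult_left_mono gauss_le_gauss_taylor that)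
qed

section \<open>The population model in terms of Gaussian integrals\<close>

lemma space_torrent_M [simp]: "space torrent_M = UNIV"
  unfolding torrent_M_def by (simp add: space_pair_measure)

lemma sets_torrent_M: "sets torrent_M = sets (lborel \<Otimes>\<^sub>M count_space UNIV)"
  unfolding torrent_M_def
  by (intro sets_pair_measure_cong) (auto simp: sets_measure_pmf_count_space)

lemma prob_space_torrent_M: "prob_space torrent_M"
  unfolding torrent_M_def
  by (intro prob_space_pair prob_space_normal_density prob_space_measure_pmf) simp

lemma torrent_event_measurable: "torrent_event w \<tau> \<in> sets torrent_M"
proof -
  have "(\<lambda>p::real \<times> bool. bval (snd p)) \<in> borel_measurable (lborel \<Otimes>\<^sub>M count_space UNIV)"
    by (intro measurable_compose[OF measurable_snd]) simp
  then have "{p \<in> space (lborel \<Otimes>\<^sub>M count_space UNIV). \<bar>bval (snd p) - fst p * w\<bar> < \<tau>}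
      \<in> sets (lborel \<Otimes>\<^sub>M count_space UNIV)"
    by measurable
  then show ?thesis
    unfolding torrent_event_def sets_torrent_M by (simp add: space_pair_measure)
qed

lemma integral_torrent_M:
  fixes f :: "real \<times> bool \<Rightarrow> real"
  assumes "integrable torrent_M f"
  shows "integral\<^sup>L torrent_M f
    = (\<integral>x. 4/5 * f (x, True) + 1/5 * f (x, False) \<partial>density lborel std_normal_density)"
proof -
  interpret N: prob_space "density lborel std_normal_density"
    by (rule prob_space_normal_density) simp
  interpret B: prob_space "measure_pmf (bernoulli_pmf torrent_alpha)"
    by (rule prob_space_measure_pmf)
  interpret pair_prob_space "density lborel std_normal_density" "measure_pmf (bernoulli_pmf torrent_alpha)" ..
  have "integral\<^sup>L torrent_M f
      = (\<integral>x. (\<integral>b. f (x, b) \<partial>measure_pmf (bernoulli_pmf torrent_alpha)) \<partial>density lborel std_normal_density)"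
    using integral_fst[of "\<lambda>x b. f (x, b)"] assms unfolding torrent_M_def by simp
  also have "\<dots> = (\<integral>x. 4/5 * f (x, True) + 1/5 * f (x, False) \<partial>density lborel std_normal_density)"
    by (intro Bochner_Integration.integral_cong refl)
      (simp add: integral_measure_pmf[of UNIV] UNIV_bool torrent_alpha_def)
  finally show ?thesis .
qed

lemma torrent_event_iff:
  assumes "w > 0"
  shows "(x, True) \<in> torrent_event w \<tau> \<longleftrightarrow> x \<in> {(1-\<tau>)/w<..<(1+\<tau>)/w}"
    and "(x, False) \<in> torrent_event w \<tau> \<longleftrightarrow> x \<in> {-\<tau>/w<..<\<tau>/w}"
  using assms unfolding torrent_event_def bval_def by (auto simp: abs_less_iff field_simps)

lemma abs_fst_le_of_torrent_event:
  assumes "w > 0" "p \<in> torrent_event w \<tau>"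
  shows "\<bar>fst p\<bar> \<le> (1 + \<bar>\<tau>\<bar>) / w"
proof -
  have "\<bar>bval (snd p) - fst p * w\<bar> < \<tau>" "\<bar>bval (snd p)\<bar> \<le> 1"
    using assms(2) unfolding torrent_event_def bval_def by auto
  then have "\<bar>fst p\<bar> * w \<le> 1 + \<bar>\<tau>\<bar>"
    using assms(1) by (simp add: abs_mult)
  then show ?thesis
    using assms(1) by (simp add: field_simps)
qed

lemma std_normal_density_eq_gauss: "std_normal_density x = gauss x / sqrt (2 * pi)"
  unfolding std_normal_density_def gauss_def by simp

lemma integral_std_normal_interval:
  assumes "l \<le> u"
  shows "integrable lborel (\<lambda>x. std_normal_density x * (x^k * indicator {l<..<u} x))"
    and "(\<integral>x. std_normal_density x * (x^k * indicator {l<..<u} x) \<partial>lborel)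
      = integral {l..u} (\<lambda>x. gauss x * x^k) / sqrt (2 * pi)"
proof -
  let ?h = "\<lambda>x. std_normal_density x * x^k"
  have "continuous_on {l..u} ?h"
    unfolding std_normal_density_def by (intro continuous_intros) auto
  then have "set_integrable lborel {l..u} ?h"
    unfolding set_integrable_def by (rule borel_integrable_compact[OF compact_Icc])
  then have integrable: "set_integrable lborel {l<..<u} ?h"
    by (rule set_integrable_subset) auto
  have indicator: "(\<lambda>x. std_normal_density x * (x^k * indicator {l<..<u} x))
      = (\<lambda>x. indicator {l<..<u} x *\<^sub>R ?h x)"
    by (auto simp: indicator_def)
  show "integrable lborel (\<lambda>x. std_normal_density x * (x^k * indicator {l<..<u} x))"
    using integrable unfolding set_integrable_def indicator .
  have "(\<integral>x. std_normal_density x * (x^k * indicator {l<..<u} x) \<partial>lborel) = (LINT x:{l<..<u}|lborel. ?h x)"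
    unfolding set_lebesgue_integral_def indicator ..
  also have "\<dots> = integral {l..u} ?h"
    by (simp add: set_borel_integral_eq_integral(2)[OF integrable] integral_open_interval_real)
  also have "\<dots> = integral {l..u} (\<lambda>x. gauss x * x^k) / sqrt (2 * pi)"
    unfolding std_normal_density_eq_gauss by (simp add: field_simps)
  finally show "(\<integral>x. std_normal_density x * (x^k * indicator {l<..<u} x) \<partial>lborel)
      = integral {l..u} (\<lambda>x. gauss x * x^k) / sqrt (2 * pi)" .
qed

lemma integral_torrent_event:
  assumes w: "w > 0" and \<tau>: "\<tau> > 0" and c: "\<And>b. \<bar>c b\<bar> \<le> 1"
  shows "(\<integral>p. c (snd p) * fst p ^ k * indicator (torrent_event w \<tau>) p \<partial>torrent_M)
    = (4/5 * c True * integral {(1-\<tau>)/w..(1+\<tau>)/w} (\<lambda>x. gauss x * x^k)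
       + 1/5 * c False * integral {-\<tau>/w..\<tau>/w} (\<lambda>x. gauss x * x^k)) / sqrt (2 * pi)"
proof -
  interpret prob_space torrent_M
    by (rule prob_space_torrent_M)
  define E where "E = torrent_event w \<tau>"
  define f where "f = (\<lambda>p::real \<times> bool. c (snd p) * fst p ^ k * indicator E p)"
  define R where "R = (1 + \<tau>) / w"
  have "(\<lambda>p::real \<times> bool. c (snd p)) \<in> borel_measurable (lborel \<Otimes>\<^sub>M count_space UNIV)"
    by (intro measurable_compose[OF measurable_snd]) simp
  then have "f \<in> borel_measurable torrent_M"
    unfolding f_def measurable_cong_sets[OF sets_torrent_M refl]
    using torrent_event_measurable[of w \<tau>] unfolding E_def sets_torrent_M by measurable
  moreover have "norm (f p) \<le> R ^ k" for p
  proof (cases "p \<in> E")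
    case True
    have "\<bar>fst p\<bar> ^ k \<le> R ^ k"
      using abs_fst_le_of_torrent_event[OF w True[unfolded E_def]] \<tau>
      unfolding R_def by (intro power_mono) simp_all
    moreover have "\<bar>c (snd p)\<bar> * \<bar>fst p\<bar> ^ k \<le> 1 * \<bar>fst p\<bar> ^ k"
      using c by (intro mult_right_mono) auto
    ultimately show ?thesis
      unfolding f_def using True by (simp add: abs_mult power_abs)
  next
    case False
    then show ?thesis
      unfolding f_def R_def using w \<tau> by simp
  qed
  ultimately have "integrable torrent_M f"
    by (intro integrable_const_bound[where B="R^k"]) auto
  have I1: "(1-\<tau>)/w \<le> (1+\<tau>)/w" and I0: "-\<tau>/w \<le> \<tau>/w"
    using w \<tau> by (auto simp: divide_right_mono)
  define g where "g = (\<lambda>x. 4/5 * c True * (x^k * indicator {(1-\<tau>)/w<..<(1+\<tau>)/w} x)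
    + 1/5 * c False * (x^k * indicator {-\<tau>/w<..<\<tau>/w} x))"
  have "4/5 * f (x, True) + 1/5 * f (x, False) = g x" for x
    unfolding f_def g_def E_def using torrent_event_iff[OF w] by (simp add: indicator_def)
  then have "integral\<^sup>L torrent_M f = (\<integral>x. g x \<partial>density lborel std_normal_density)"
    using integral_torrent_M[OF \<open>integrable torrent_M f\<close>] by simp
  also have "\<dots> = (\<integral>x. std_normal_density x * g x \<partial>lborel)"
    by (subst integral_density) (auto simp: g_def)
  also have "\<dots> = (\<integral>x. 4/5 * c True * (std_normal_density x * (x^k * indicator {(1-\<tau>)/w<..<(1+\<tau>)/w} x))
      + 1/5 * c False * (std_normal_density x * (x^k * indicator {-\<tau>/w<..<\<tau>/w} x)) \<partial>lborel)"
    unfolding g_def by (simp add: algebra_simps)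
  also have "\<dots> = 4/5 * c True * (\<integral>x. std_normal_density x * (x^k * indicator {(1-\<tau>)/w<..<(1+\<tau>)/w} x) \<partial>lborel)
      + 1/5 * c False * (\<integral>x. std_normal_density x * (x^k * indicator {-\<tau>/w<..<\<tau>/w} x) \<partial>lborel)"
    using integral_std_normal_interval(1)[OF I1, of k] integral_std_normal_interval(1)[OF I0, of k]
    by simp
  also have "\<dots> = (4/5 * c True * integral {(1-\<tau>)/w..(1+\<tau>)/w} (\<lambda>x. gauss x * x^k)
       + 1/5 * c False * integral {-\<tau>/w..\<tau>/w} (\<lambda>x. gauss x * x^k)) / sqrt (2 * pi)"
    unfolding integral_std_normal_interval(2)[OF I1] integral_std_normal_interval(2)[OF I0]
    by (simp add: field_simps)
  finally show ?thesis
    unfolding f_def E_def .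
qed

lemma integral_x_gauss:
  assumes "l \<le> u"
  shows "integral {l..u} (\<lambda>x. gauss x * x) = gauss l - gauss u"
proof -
  have "((\<lambda>x. - gauss x) has_real_derivative gauss x * x) (at x within {l..u})" for x
    unfolding gauss_def by (rule derivative_eq_intros refl | simp)+
  then have "((\<lambda>x. gauss x * x) has_integral (- gauss u - - gauss l)) {l..u}"
    using assms by (intro fundamental_theorem_of_calculus)
      (simp_all add: has_real_derivative_iff_has_vector_derivative)
  then show ?thesis
    by (simp add: integral_unique)
qed

definition torrent_mass :: "real \<Rightarrow> real \<Rightarrow> real" where
  "torrent_mass w t = 4/5 * gauss_int ((1-t)/w) ((1+t)/w) + 1/5 * gauss_int (-t/w) (t/w)"

definition torrent_num :: "real \<Rightarrow> real \<Rightarrow> real" where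
  "torrent_num w t = 4/5 * (gauss ((1-t)/w) - gauss ((1+t)/w))"

definition torrent_den :: "real \<Rightarrow> real \<Rightarrow> real" where
  "torrent_den w t = 4/5 * sq_gauss_int ((1-t)/w) ((1+t)/w) + 1/5 * sq_gauss_int (-t/w) (t/w)"

lemma measure_torrent_event:
  assumes "w > 0" "t > 0"
  shows "measure torrent_M (torrent_event w t) = torrent_mass w t / sqrt (2 * pi)"
  using integral_torrent_event[OF assms, of "\<lambda>_. 1" 0]
  unfolding torrent_mass_def gauss_int_def by simp

lemma integral_torrent_num:
  assumes "w > 0" "t > 0"
  shows "(\<integral>p. bval (snd p) * fst p * indicator (torrent_event w t) p \<partial>torrent_M)
    = torrent_num w t / sqrt (2 * pi)"
proof -
  have "(1-t)/w \<le> (1+t)/w"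
    using assms by (simp add: divide_right_mono)
  then show ?thesis
    using integral_torrent_event[OF assms, of bval 1]
    unfolding torrent_num_def by (simp add: bval_def integral_x_gauss)
qed

lemma integral_torrent_den:
  assumes "w > 0" "t > 0"
  shows "(\<integral>p. (fst p)^2 * indicator (torrent_event w t) p \<partial>torrent_M) = torrent_den w t / sqrt (2 * pi)"
  using integral_torrent_event[OF assms, of "\<lambda>_. 1" 2]
  unfolding torrent_den_def sq_gauss_int_def by (simp add: mult.commute)

section \<open>Monotonicity and continuity\<close>

lemma gauss_int_nonneg: "0 \<le> gauss_int l u"
  unfolding gauss_int_def using gauss_integrable
  by (rule integral_nonneg) (simp add: less_imp_le[OF gauss_pos])

lemma sq_gauss_int_nonneg: "0 \<le> sq_gauss_int l u"
  unfolding sq_gauss_int_def using sq_gauss_integrable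
  by (rule integral_nonneg) (simp add: less_imp_le[OF gauss_pos])

lemma gauss_int_mono: "l' \<le> l \<Longrightarrow> u \<le> u' \<Longrightarrow> gauss_int l u \<le> gauss_int l' u'"
  unfolding gauss_int_def
  by (rule integral_subset_le) (auto intro: gauss_integrable less_imp_le[OF gauss_pos])

lemma sq_gauss_int_mono: "l' \<le> l \<Longrightarrow> u \<le> u' \<Longrightarrow> sq_gauss_int l u \<le> sq_gauss_int l' u'"
  unfolding sq_gauss_int_def
  by (rule integral_subset_le)
    (auto intro!: sq_gauss_integrable mult_nonneg_nonneg less_imp_le[OF gauss_pos])

lemma gauss_int_combine: "a \<le> b \<Longrightarrow> b \<le> c \<Longrightarrow> gauss_int a b + gauss_int b c = gauss_int a c"
  unfolding gauss_int_def
  by (rule Henstock_Kurzweil_Integration.integral_combine) (auto intro: gauss_integrable)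

lemma gauss_int_ge_width:
  assumes "0 \<le> a" "a \<le> b"
  shows "(b - a) * gauss b \<le> gauss_int a b"
proof -
  have "((\<lambda>x. gauss b) has_integral ((b - a) * gauss b)) {a..b}"
    using has_integral_const_real[of "gauss b" a b] assms by simp
  moreover have "(gauss has_integral gauss_int a b) {a..b}"
    unfolding gauss_int_def using gauss_integrable by (rule integrable_integral)
  ultimately show ?thesis
    by (rule has_integral_le) (use assms in \<open>auto intro: gauss_antimono\<close>)
qed

lemma sq_gauss_int_ge_width:
  assumes "0 \<le> a" "a \<le> b"
  shows "(b - a) * (a^2 * gauss b) \<le> sq_gauss_int a b"
proof -
  have "((\<lambda>x. a^2 * gauss b) has_integral ((b - a) * (a^2 * gauss b))) {a..b}"
    using has_integral_const_real[of "a^2 * gauss b" a b] assms by simp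
  moreover have "((\<lambda>x. x^2 * gauss x) has_integral sq_gauss_int a b) {a..b}"
    unfolding sq_gauss_int_def using sq_gauss_integrable by (rule integrable_integral)
  moreover have "a^2 * gauss b \<le> x^2 * gauss x" if "x \<in> {a..b}" for x
    using assms that
    by (intro mult_mono power_mono gauss_antimono less_imp_le[OF gauss_pos]) auto
  ultimately show ?thesis
    by (rule has_integral_le)
qed

lemma gauss_int_symmetric_strict_mono:
  assumes "0 \<le> s" "s < s'"
  shows "gauss_int (-s) s < gauss_int (-s') s'"
proof -
  have "0 < (s' - s) * gauss s'"
    using assms gauss_pos by simp
  also have "\<dots> \<le> gauss_int s s'"
    using assms by (intro gauss_int_ge_width) auto
  finally show ?thesis
    using assms gauss_int_combine[of "-s'" "-s" s'] gauss_int_combine[of "-s" s s']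
      gauss_int_nonneg[of "-s'" "-s"] by linarith
qed

lemma sq_gauss_int_symmetric_pos:
  assumes "s > 0"
  shows "sq_gauss_int (-s) s > 0"
proof -
  have "0 < (s - s/2) * ((s/2)^2 * gauss s)"
    using assms gauss_pos[of s] by simp
  also have "\<dots> \<le> sq_gauss_int (s/2) s"
    using assms by (intro sq_gauss_int_ge_width) auto
  also have "\<dots> \<le> sq_gauss_int (-s) s"
    using assms by (intro sq_gauss_int_mono) auto
  finally show ?thesis .
qed

lemma continuous_on_integral_between:
  fixes f :: "real \<Rightarrow> real"
  assumes f: "continuous_on {a..b} f"
    and l: "continuous_on S l" and u: "continuous_on S u"
    and bounds: "\<And>x. x \<in> S \<Longrightarrow> a \<le> l x \<and> l x \<le> u x \<and> u x \<le> b"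
  shows "continuous_on S (\<lambda>x. integral {l x..u x} f)"
proof -
  let ?I = "\<lambda>y. integral {a..y} f"
  have I: "continuous_on {a..b} ?I"
    using f by (intro indefinite_integral_continuous_1 integrable_continuous_interval)
  have "continuous_on S (\<lambda>x. ?I (u x) - ?I (l x))"
  proof (intro continuous_on_diff)
    show "continuous_on S (\<lambda>x. ?I (u x))"
      by (rule continuous_on_compose2[OF I u]) (use bounds in fastforce)
    show "continuous_on S (\<lambda>x. ?I (l x))"
      by (rule continuous_on_compose2[OF I l]) (use bounds in fastforce)
  qed
  moreover have "?I (u x) - ?I (l x) = integral {l x..u x} f" if "x \<in> S" for x
  proof -
    have "f integrable_on {a..u x}"
      using bounds[OF that]
      by (intro integrable_continuous_interval continuous_on_subset[OF f]) auto
    then show ?thesis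
      using Henstock_Kurzweil_Integration.integral_combine[of a "l x" "u x" f] bounds[OF that]
      by simp
  qed
  ultimately show ?thesis
    by (rule continuous_on_eq)
qed

lemma torrent_mass_strict_mono:
  assumes "w > 0" "0 \<le> t" "t < t'"
  shows "torrent_mass w t < torrent_mass w t'"
proof -
  have "gauss_int ((1-t)/w) ((1+t)/w) \<le> gauss_int ((1-t')/w) ((1+t')/w)"
    using assms by (intro gauss_int_mono divide_right_mono) auto
  moreover have "gauss_int (-(t/w)) (t/w) < gauss_int (-(t'/w)) (t'/w)"
    using assms by (intro gauss_int_symmetric_strict_mono divide_strict_right_mono) auto
  ultimately show ?thesis
    unfolding torrent_mass_def by simp
qed

lemma torrent_mass_mono: "w > 0 \<Longrightarrow> 0 \<le> t \<Longrightarrow> t \<le> t' \<Longrightarrow> torrent_mass w t \<le> torrent_mass w t'"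
  using torrent_mass_strict_mono[of w t t'] by (cases "t = t'") auto

lemma torrent_mass_zero [simp]: "torrent_mass w 0 = 0"
  unfolding torrent_mass_def gauss_int_def by simp

lemma torrent_den_mono:
  assumes "w > 0" "0 \<le> t" "t \<le> t'"
  shows "torrent_den w t \<le> torrent_den w t'"
  unfolding torrent_den_def using assms
  by (intro add_mono mult_left_mono sq_gauss_int_mono divide_right_mono) auto

lemma torrent_den_pos: "w > 0 \<Longrightarrow> t > 0 \<Longrightarrow> torrent_den w t > 0"
  unfolding torrent_den_def
  using sq_gauss_int_symmetric_pos[of "t/w"] sq_gauss_int_nonneg[of "(1-t)/w" "(1+t)/w"] by simp

lemma torrent_num_mono:
  assumes "w > 0" "0 \<le> t" "t \<le> t'" "t' \<le> 1"
  shows "torrent_num w t \<le> torrent_num w t'"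
proof -
  have "gauss ((1-t)/w) \<le> gauss ((1-t')/w)" "gauss ((1+t')/w) \<le> gauss ((1+t)/w)"
    using assms by (intro gauss_antimono divide_right_mono; simp)+
  then show ?thesis
    unfolding torrent_num_def by simp
qed

lemma continuous_on_torrent_quantities:
  assumes w: "continuous_on S w" and t: "continuous_on S t"
    and range: "\<And>x. x \<in> S \<Longrightarrow> 11/20 \<le> w x \<and> 0 \<le> t x \<and> t x \<le> 2"
  shows "continuous_on S (\<lambda>x. torrent_mass (w x) (t x))"
    and "continuous_on S (\<lambda>x. torrent_num (w x) (t x))"
    and "continuous_on S (\<lambda>x. torrent_den (w x) (t x))"
proof -
  have "w x \<noteq> 0" if "x \<in> S" for x
    using range[OF that] by auto
  then have ends: "continuous_on S (\<lambda>x. (1 - t x) / w x)" "continuous_on S (\<lambda>x. (1 + t x) / w x)"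
    "continuous_on S (\<lambda>x. - t x / w x)" "continuous_on S (\<lambda>x. t x / w x)"
    by (auto intro!: continuous_intros w t)
  have small: "-10 \<le> y / w x \<and> y / w x \<le> 10" if "x \<in> S" "\<bar>y\<bar> \<le> 3" for x y
    using range[OF that(1)] that(2) by (auto simp: abs_le_iff divide_le_eq le_divide_eq)
  have order: "(1 - t x) / w x \<le> (1 + t x) / w x" "- t x / w x \<le> t x / w x" if "x \<in> S" for x
    using range[OF that] by (auto intro: divide_right_mono)
  have bounds:
    "-10 \<le> (1 - t x) / w x \<and> (1 - t x) / w x \<le> (1 + t x) / w x \<and> (1 + t x) / w x \<le> 10"
    "-10 \<le> - t x / w x \<and> - t x / w x \<le> t x / w x \<and> t x / w x \<le> 10"
    if "x \<in> S" for x
  proof -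
    have "\<bar>1 - t x\<bar> \<le> 3" "\<bar>1 + t x\<bar> \<le> 3" "\<bar>- t x\<bar> \<le> 3" "\<bar>t x\<bar> \<le> 3"
      using range[OF that] by auto
    then show "-10 \<le> (1 - t x) / w x \<and> (1 - t x) / w x \<le> (1 + t x) / w x \<and> (1 + t x) / w x \<le> 10"
      and "-10 \<le> - t x / w x \<and> - t x / w x \<le> t x / w x \<and> t x / w x \<le> 10"
      using small[OF that] order[OF that] by blast+
  qed
  have gauss_cont: "continuous_on {-10..10} gauss" "continuous_on {-10..10} (\<lambda>x. x^2 * gauss x)"
    by (intro continuous_intros continuous_on_gauss)+
  show "continuous_on S (\<lambda>x. torrent_mass (w x) (t x))"
    unfolding torrent_mass_def gauss_int_def
    by (intro continuous_intros continuous_on_integral_between[OF gauss_cont(1)] ends bounds)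
  show "continuous_on S (\<lambda>x. torrent_den (w x) (t x))"
    unfolding torrent_den_def sq_gauss_int_def
    by (intro continuous_intros continuous_on_integral_between[OF gauss_cont(2)] ends bounds)
  show "continuous_on S (\<lambda>x. torrent_num (w x) (t x))"
    unfolding torrent_num_def
    by (intro continuous_intros continuous_on_compose2[OF continuous_on_gauss ends(1)]
        continuous_on_compose2[OF continuous_on_gauss ends(2)]) auto
qed

section \<open>Numerical estimates\<close>

lemma gauss_int_symmetric_bounds:
  assumes "0 \<le> c"
  shows "even n \<Longrightarrow> 2 * gauss_taylor_prim n c \<le> gauss_int (-c) c"
    and "odd n \<Longrightarrow> gauss_int (-c) c \<le> 2 * gauss_taylor_prim n c"
  using gauss_int_bounds[of "-c" c n] assms by (simp_all add: gauss_taylor_prim_minus)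

lemma sq_gauss_int_symmetric_bounds:
  assumes "0 \<le> c"
  shows "even n \<Longrightarrow> 2 * sq_gauss_taylor_prim n c \<le> sq_gauss_int (-c) c"
    and "odd n \<Longrightarrow> sq_gauss_int (-c) c \<le> 2 * sq_gauss_taylor_prim n c"
  using sq_gauss_int_bounds[of "-c" c n] assms by (simp_all add: sq_gauss_taylor_prim_minus)

lemma sqrt_2pi_bounds: "2.5066 \<le> sqrt (2 * pi)" "sqrt (2 * pi) \<le> 2.5067"
proof -
  show "2.5066 \<le> sqrt (2 * pi)"
    using pi_approx by (intro real_le_rsqrt) (simp add: power2_eq_square)
  have "2 * pi \<le> 2.5067^2"
    using pi_approx by (simp add: power2_eq_square)
  then show "sqrt (2 * pi) \<le> 2.5067"
    using real_sqrt_le_mono by fastforce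
qed

lemma gauss_int_0_1_lower: "sqrt (2 * pi) / 4 < gauss_int 0 1"
proof -
  have "0.8556243918 \<le> gauss_taylor_prim 12 1"
    by (rule gauss_taylor_prim_ge_certified[where p=1 and q=1 and D="2^40"]) simp_all
  then show ?thesis
    using gauss_int_bounds(1)[of 0 1 12] sqrt_2pi_bounds
    by (simp add: gauss_taylor_prim_def)
qed

lemma torrent_mass_11_20_bracket:
  "torrent_mass (11/20) (373/1000) < sqrt (2 * pi) / 5"
  "sqrt (2 * pi) / 5 < torrent_mass (11/20) (383/1000)"
proof -
  have "gauss_taylor_prim 23 (1373/550) \<le> 1.237588316"
    by (rule gauss_taylor_prim_le_certified[where p=1373 and q=550 and D="2^40"]) simp_all
  moreover have "0.9346135211 \<le> gauss_taylor_prim 23 (57/50)"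
    by (rule gauss_taylor_prim_ge_certified[where p=57 and q=50 and D="2^40"]) simp_all
  moreover have "gauss_taylor_prim 9 (373/550) \<le> 0.6295943117"
    by (rule gauss_taylor_prim_le_certified[where p=373 and q=550 and D="2^40"]) simp_all
  ultimately show "torrent_mass (11/20) (373/1000) < sqrt (2 * pi) / 5"
    using gauss_int_bounds(2)[of "57/50" "1373/550" 23]
      gauss_int_symmetric_bounds(2)[of "373/550" 9] sqrt_2pi_bounds
    by (simp add: torrent_mass_def)
  have "1.2383763952 \<le> gauss_taylor_prim 22 (1383/550)"
    by (rule gauss_taylor_prim_ge_certified[where p=1383 and q=550 and D="2^40"]) simp_all
  moreover have "gauss_taylor_prim 22 (617/550) \<le> 0.9250213406"
    by (rule gauss_taylor_prim_le_certified[where p=617 and q=550 and D="2^40"]) simp_all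
  moreover have "0.6439513876 \<le> gauss_taylor_prim 10 (383/550)"
    by (rule gauss_taylor_prim_ge_certified[where p=383 and q=550 and D="2^40"]) simp_all
  ultimately show "sqrt (2 * pi) / 5 < torrent_mass (11/20) (383/1000)"
    using gauss_int_bounds(1)[of "617/550" "1383/550" 22]
      gauss_int_symmetric_bounds(1)[of "383/550" 10] sqrt_2pi_bounds
    by (simp add: torrent_mass_def)
qed

lemma torrent_mass_2_bracket:
  "torrent_mass 2 (11/20) < sqrt (2 * pi) / 5"
  "sqrt (2 * pi) / 5 < torrent_mass 2 (57/100)"
proof -
  have "gauss_taylor_prim 9 (31/40) \<le> 0.7039368451"
    by (rule gauss_taylor_prim_le_certified[where p=31 and q=40 and D="2^40"]) simp_all
  moreover have "0.2231158923 \<le> gauss_taylor_prim 9 (9/40)"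
    by (rule gauss_taylor_prim_ge_certified[where p=9 and q=40 and D="2^40"]) simp_all
  moreover have "gauss_taylor_prim 7 (11/40) \<le> 0.2715728219"
    by (rule gauss_taylor_prim_le_certified[where p=11 and q=40 and D="2^40"]) simp_all
  ultimately show "torrent_mass 2 (11/20) < sqrt (2 * pi) / 5"
    using gauss_int_bounds(2)[of "9/40" "31/40" 9]
      gauss_int_symmetric_bounds(2)[of "11/40" 7] sqrt_2pi_bounds
    by (simp add: torrent_mass_def)
  have "0.711313966 \<le> gauss_taylor_prim 10 (157/200)"
    by (rule gauss_taylor_prim_ge_certified[where p=157 and q=200 and D="2^40"]) simp_all
  moreover have "gauss_taylor_prim 10 (43/200) \<le> 0.2133550263"
    by (rule gauss_taylor_prim_le_certified[where p=43 and q=200 and D="2^40"]) simp_all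
  moreover have "0.2811883687 \<le> gauss_taylor_prim 6 (57/200)"
    by (rule gauss_taylor_prim_ge_certified[where p=57 and q=200 and D="2^40"]) simp_all
  ultimately show "sqrt (2 * pi) / 5 < torrent_mass 2 (57/100)"
    using gauss_int_bounds(1)[of "43/200" "157/200" 10]
      gauss_int_symmetric_bounds(1)[of "57/200" 6] sqrt_2pi_bounds
    by (simp add: torrent_mass_def)
qed

lemma torrent_den_num_11_20: "11/20 * torrent_den (11/20) (383/1000) < torrent_num (11/20) (373/1000)"
proof -
  have "sq_gauss_taylor_prim 23 (1383/550) \<le> 1.1318515859"
    by (rule sq_gauss_taylor_prim_le_certified[where p=1383 and q=550 and D="2^40"]) (simp_all add: power_divide)
  moreover have "0.327094738 \<le> sq_gauss_taylor_prim 23 (617/550)"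
    by (rule sq_gauss_taylor_prim_ge_certified[where p=617 and q=550 and D="2^40"]) (simp_all add: power_divide)
  moreover have "sq_gauss_taylor_prim 9 (383/550) \<le> 0.0975188625"
    by (rule sq_gauss_taylor_prim_le_certified[where p=383 and q=550 and D="2^40"]) (simp_all add: power_divide)
  moreover have "0.5221501963 \<le> gauss_taylor 14 (57/50)"
    by (rule gauss_taylor_ge_certified[where p=57 and q=50 and D="2^40"]) simp_all
  moreover have "gauss_taylor 23 (1373/550) \<le> 0.0443378883"
    by (rule gauss_taylor_le_certified[where p=1373 and q=550 and D="2^40"]) simp_all
  ultimately show ?thesis
    using sq_gauss_int_bounds(2)[of "617/550" "1383/550" 23]
      sq_gauss_int_symmetric_bounds(2)[of "383/550" 9]
      gauss_taylor_le_gauss[of 14 "57/50"] gauss_le_gauss_taylor[of 23 "1373/550"]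
    by (simp add: torrent_den_def torrent_num_def)
qed

lemma torrent_num_den_2: "torrent_num 2 (57/100) < 2 * torrent_den 2 (11/20)"
proof -
  have "0.1299821128 \<le> sq_gauss_taylor_prim 10 (31/40)"
    by (rule sq_gauss_taylor_prim_ge_certified[where p=31 and q=40 and D="2^40"]) (simp_all add: power_divide)
  moreover have "sq_gauss_taylor_prim 10 (9/40) \<le> 0.0037397279"
    by (rule sq_gauss_taylor_prim_le_certified[where p=9 and q=40 and D="2^40"]) (simp_all add: power_divide)
  moreover have "0.0067771185 \<le> sq_gauss_taylor_prim 6 (11/40)"
    by (rule sq_gauss_taylor_prim_ge_certified[where p=11 and q=40 and D="2^40"]) (simp_all add: power_divide)
  moreover have "gauss_taylor 7 (43/200) \<le> 0.977152548"
    by (rule gauss_taylor_le_certified[where p=43 and q=200 and D="2^40"]) simp_all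
  moreover have "0.7348326446 \<le> gauss_taylor 10 (157/200)"
    by (rule gauss_taylor_ge_certified[where p=157 and q=200 and D="2^40"]) simp_all
  ultimately show ?thesis
    using sq_gauss_int_bounds(1)[of "9/40" "31/40" 10]
      sq_gauss_int_symmetric_bounds(1)[of "11/40" 6]
      gauss_le_gauss_taylor[of 7 "43/200"] gauss_taylor_le_gauss[of 10 "157/200"]
    by (simp add: torrent_den_def torrent_num_def)
qed

section \<open>The threshold and the fixed point\<close>

lemma continuous_on_implicit_strict_mono:
  fixes m :: "'a::topological_space \<Rightarrow> real \<Rightarrow> real" and r :: "'a \<Rightarrow> real"
  assumes mono: "\<And>w s t. w \<in> S \<Longrightarrow> a \<le> s \<Longrightarrow> s < t \<Longrightarrow> t \<le> b \<Longrightarrow> m w s < m w t"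
    and cont: "\<And>t. a \<le> t \<Longrightarrow> t \<le> b \<Longrightarrow> continuous_on S (\<lambda>w. m w t)"
    and root: "\<And>w. w \<in> S \<Longrightarrow> a < r w \<and> r w < b \<and> m w (r w) = c"
  shows "continuous_on S r"
  unfolding continuous_on_topological
proof (intro ballI allI impI)
  fix w0 V
  assume w0: "w0 \<in> S" and "open V" "r w0 \<in> V"
  then obtain e where e: "e > 0" "ball (r w0) e \<subseteq> V"
    using open_contains_ball by blast
  have mono_le: "m w s \<le> m w t" if "w \<in> S" "a \<le> s" "s \<le> t" "t \<le> b" for w s t
    using mono[of w s t] that by (cases "s = t") auto
  define d where "d = min e (min (r w0 - a) (b - r w0)) / 2"
  have "0 < min e (min (r w0 - a) (b - r w0))"
    using e root[OF w0] by simp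
  moreover have "min e (min (r w0 - a) (b - r w0)) \<le> e"
    "min e (min (r w0 - a) (b - r w0)) \<le> r w0 - a" "min e (min (r w0 - a) (b - r w0)) \<le> b - r w0"
    by linarith+
  ultimately have d: "0 < d" "d < e" "a \<le> r w0 - d" "r w0 + d \<le> b"
    unfolding d_def by linarith+
  have "m w0 (r w0 - d) < c" "c < m w0 (r w0 + d)"
    using mono[OF w0, of "r w0 - d" "r w0"] mono[OF w0, of "r w0" "r w0 + d"] d root[OF w0] by auto
  moreover note cont_lo = cont[of "r w0 - d", unfolded continuous_on_topological, rule_format, OF _ _ w0]
    and cont_hi = cont[of "r w0 + d", unfolded continuous_on_topological, rule_format, OF _ _ w0]
  ultimately obtain A B where A: "open A" "w0 \<in> A" "\<forall>w\<in>S. w \<in> A \<longrightarrow> m w (r w0 - d) < c"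
    and B: "open B" "w0 \<in> B" "\<forall>w\<in>S. w \<in> B \<longrightarrow> c < m w (r w0 + d)"
    using cont_lo[OF _ _ open_lessThan[of c]] cont_hi[OF _ _ open_greaterThan[of c]] d root[OF w0]
    by auto
  show "\<exists>U. open U \<and> w0 \<in> U \<and> (\<forall>w\<in>S. w \<in> U \<longrightarrow> r w \<in> V)"
  proof (intro exI conjI ballI impI)
    show "open (A \<inter> B)" "w0 \<in> A \<inter> B"
      using A B by auto
    fix w
    assume w: "w \<in> S" "w \<in> A \<inter> B"
    have "r w0 - d < r w"
    proof (rule ccontr)
      assume "\<not> r w0 - d < r w"
      then have "m w (r w) \<le> m w (r w0 - d)"
        using mono_le[OF w(1), of "r w" "r w0 - d"] root[OF w(1)] d by auto
      then show False
        using A(3) w root[OF w(1)] by auto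
    qed
    moreover have "r w < r w0 + d"
    proof (rule ccontr)
      assume "\<not> r w < r w0 + d"
      then have "m w (r w0 + d) \<le> m w (r w)"
        using mono_le[OF w(1), of "r w0 + d" "r w"] root[OF w(1)] d by auto
      then show False
        using B(3) w root[OF w(1)] by auto
    qed
    ultimately show "r w \<in> V"
      using d e by (auto simp: dist_real_def)
  qed
qed

lemma torrent_mass_one:
  assumes "w \<in> {11/20..2}"
  shows "sqrt (2 * pi) / 5 < torrent_mass w 1"
proof -
  have "gauss_int 0 1 \<le> gauss_int ((1-1)/w) ((1+1)/w)"
    using assms by (intro gauss_int_mono) (auto simp: field_simps)
  then show ?thesis
    using gauss_int_0_1_lower gauss_int_nonneg[of "-1/w" "1/w"] unfolding torrent_mass_def by simp
qed

lemma torrent_tau_eqI: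
  assumes "w > 0" "t > 0" "torrent_mass w t = sqrt (2 * pi) / 5"
  shows "torrent_tau w = t"
  unfolding torrent_tau_def
proof (rule the_equality)
  show "0 < t \<and> measure torrent_M (torrent_event w t) = 1 - torrent_alpha"
    using assms by (simp add: measure_torrent_event torrent_alpha_def)
next
  fix s
  assume "0 < s \<and> measure torrent_M (torrent_event w s) = 1 - torrent_alpha"
  then have "0 < s" "torrent_mass w s = sqrt (2 * pi) / 5"
    using assms(1) by (auto simp: measure_torrent_event torrent_alpha_def field_simps)
  then show "s = t"
    using torrent_mass_strict_mono[OF assms(1), of s t] torrent_mass_strict_mono[OF assms(1), of t s]
      assms by (cases s t rule: linorder_cases) auto
qed

lemma torrent_tau_root:
  assumes "w \<in> {11/20..2}"
  shows "0 < torrent_tau w" "torrent_tau w < 1" "torrent_mass w (torrent_tau w) = sqrt (2 * pi) / 5"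
proof -
  have "w > 0"
    using assms by auto
  have "continuous_on {0..1} (\<lambda>t. torrent_mass w t)"
    using assms by (intro continuous_on_torrent_quantities(1)) (auto intro: continuous_intros)
  then obtain t where t: "0 \<le> t" "t \<le> 1" "torrent_mass w t = sqrt (2 * pi) / 5"
    using IVT'[of "torrent_mass w" 0 "sqrt (2 * pi) / 5" 1] torrent_mass_one[OF assms] by auto
  moreover have "t \<noteq> 0" "t \<noteq> 1"
    using t(3) torrent_mass_one[OF assms] by auto
  ultimately show "0 < torrent_tau w" "torrent_tau w < 1"
    "torrent_mass w (torrent_tau w) = sqrt (2 * pi) / 5"
    using torrent_tau_eqI[OF \<open>w > 0\<close>, of t] by auto
qed

lemma torrent_tau_between:
  assumes "w \<in> {11/20..2}" "0 \<le> s" "torrent_mass w s < sqrt (2 * pi) / 5"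
    and "0 \<le> t" "sqrt (2 * pi) / 5 < torrent_mass w t"
  shows "s < torrent_tau w" "torrent_tau w < t"
  using torrent_tau_root[OF assms(1)] torrent_mass_mono[of w "torrent_tau w" s]
    torrent_mass_mono[of w t "torrent_tau w"] assms by force+

lemma continuous_on_torrent_tau: "continuous_on {11/20..2} torrent_tau"
proof (rule continuous_on_implicit_strict_mono[where a=0 and b=2])
  show "\<And>w s t. w \<in> {11/20..2} \<Longrightarrow> 0 \<le> s \<Longrightarrow> s < t \<Longrightarrow> t \<le> 2
      \<Longrightarrow> torrent_mass w s < torrent_mass w t"
    by (rule torrent_mass_strict_mono) auto
  show "\<And>t. 0 \<le> t \<Longrightarrow> t \<le> 2 \<Longrightarrow> continuous_on {11/20..2} (\<lambda>w. torrent_mass w t)"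
    by (intro continuous_on_torrent_quantities(1)) (auto intro: continuous_intros)
  show "\<And>w. w \<in> {11/20..2} \<Longrightarrow>
      0 < torrent_tau w \<and> torrent_tau w < 2 \<and> torrent_mass w (torrent_tau w) = sqrt (2 * pi) / 5"
    using torrent_tau_root by fastforce
qed

lemma torrent_F_eq:
  assumes "w \<in> {11/20..2}"
  shows "torrent_F w = torrent_num w (torrent_tau w) / torrent_den w (torrent_tau w)"
  using assms torrent_tau_root(1)[OF assms]
  by (simp add: torrent_F_def torrent_A_def integral_torrent_num integral_torrent_den)

lemma continuous_on_torrent_F: "continuous_on {11/20..2} torrent_F"
proof -
  have range: "\<And>w. w \<in> {11/20..2} \<Longrightarrow> 11/20 \<le> w \<and> 0 \<le> torrent_tau w \<and> torrent_tau w \<le> 2"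
    using torrent_tau_root by fastforce
  have den: "torrent_den w (torrent_tau w) \<noteq> 0" if "w \<in> {11/20..2}" for w
    using that torrent_tau_root(1)[OF that] torrent_den_pos[of w "torrent_tau w"] by auto
  have "continuous_on {11/20..2} (\<lambda>w. torrent_num w (torrent_tau w) / torrent_den w (torrent_tau w))"
    using continuous_on_torrent_quantities(2,3)[OF continuous_on_id continuous_on_torrent_tau range]
    by (rule continuous_on_divide) (use den in auto)
  then show ?thesis
    by (rule continuous_on_eq) (simp add: torrent_F_eq)
qed

lemma torrent_F_11_20: "11/20 < torrent_F (11/20)"
proof -
  let ?w = "11/20 :: real" let ?t = "torrent_tau (11/20)"
  have t: "373/1000 < ?t" "?t < 383/1000"
    using torrent_tau_between[OF _ _ torrent_mass_11_20_bracket(1) _ torrent_mass_11_20_bracket(2)]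
    by auto
  have "?w * torrent_den ?w ?t \<le> ?w * torrent_den ?w (383/1000)"
    using t by (intro mult_left_mono torrent_den_mono) auto
  also have "\<dots> < torrent_num ?w (373/1000)"
    by (rule torrent_den_num_11_20)
  also have "\<dots> \<le> torrent_num ?w ?t"
    using t torrent_tau_root(2)[of ?w] by (intro torrent_num_mono) auto
  finally show ?thesis
    using torrent_den_pos[of ?w ?t] t by (simp add: torrent_F_eq field_simps)
qed

lemma torrent_F_2: "torrent_F 2 < 2"
proof -
  let ?t = "torrent_tau 2"
  have t: "11/20 < ?t" "?t < 57/100"
    using torrent_tau_between[OF _ _ torrent_mass_2_bracket(1) _ torrent_mass_2_bracket(2)]
    by auto
  have "torrent_num 2 ?t \<le> torrent_num 2 (57/100)"
    using t by (intro torrent_num_mono) auto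
  also have "\<dots> < 2 * torrent_den 2 (11/20)"
    by (rule torrent_num_den_2)
  also have "\<dots> \<le> 2 * torrent_den 2 ?t"
    using t by (intro mult_left_mono torrent_den_mono) auto
  finally show ?thesis
    using torrent_den_pos[of 2 ?t] t by (simp add: torrent_F_eq field_simps)
qed

theorem mainTheorem12:
  shows "\<exists>w::real. w > 1/2 \<and> torrent_F w = w"
proof -
  have "continuous_on {11/20..2} (\<lambda>w. torrent_F w - w)"
    using continuous_on_torrent_F by (intro continuous_intros)
  then obtain w where "11/20 \<le> w" "w \<le> 2" "torrent_F w - w = 0"
    using IVT2'[of "\<lambda>w. torrent_F w - w" 2 0 "11/20"] torrent_F_11_20 torrent_F_2 by auto
  then show ?thesis
    by (intro exI[of _ w]) auto
qed

end
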